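(* Let $\mathbf i=(I,\varepsilon,d)$ be a feed, $k\in I$, and $\mathbf i'=(I,\varepsilon',d)$ its mutation in direction $k$. Equip the torus $\mathcal D_{\mathbf i}$ with coordinates $(B_i,X_i)_{i\in I}$ and the Poisson structure $$\{B_i,B_j\}=0,\quad \{X_i,B_j\}=d_i^{-1}\delta_{ij}X_iB_j,\quad \{X_i,X_j\}=\widehat\varepsilon_{ij}X_iX_j,$$ and the torus $\mathcal D_{\mathbf i'}$ with coordinates $(B'_i,X'_i)$ and the same structure with $\widehat\varepsilon'_{ij}=\varepsilon'_{ij}d_j^{-1}$; equip the torus $\mathcal X_{\mathbf i}$ with coordinates $X_i$ and bracket $\{X_i,X_j\}=\widehat\varepsilon_{ij}X_iX_j$, and $\mathcal X_{\mathbf i'}$ likewise with $\widehat\varepsilon'$. Let $\mu'_k:\mathcal D_{\mathbf i}\to\mathcal D_{\mathbf i'}$ be the isomorphism given by $$(\mu'_k)^*B'_i=B_i\ (i\ne k),\quad (\mu'_k)^*B'_k=\mathbb B_k^-/B_k,\quad (\mu'_k)^*X'_k=X_k^{-1},\quad (\mu'_k)^*X'_i=X_iX_k^{[\varepsilon_{ik}]_+}\ (i\neq k),$$ and $\mu'_k:\mathcal X_{\mathbf i}\to\mathcal X_{\mathbf i'}$ the isomorphism given by the last two formulas. Then both maps $\mu'_k$ are Poisson maps.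
   Context: A feed $\mathbf i=(I,\varepsilon,d)$: $I$ a finite set, $\varepsilon=(\varepsilon_{ij})_{i,j\in I}$ an integer matrix, $d=(d_i)$ positive integers such that $\widehat\varepsilon_{ij}:=\varepsilon_{ij}d_j^{-1}$ is skew-symmetric. Its mutation in direction $k$ is $\mathbf i'=(I,\varepsilon',d)$ with $\varepsilon'_{ij}=-\varepsilon_{ij}$ if $i=k$ or $j=k$; $\varepsilon'_{ij}=\varepsilon_{ij}$ if $\varepsilon_{ik}\varepsilon_{kj}\le0$; $\varepsilon'_{ij}=\varepsilon_{ij}+|\varepsilon_{ik}|\varepsilon_{kj}$ if $\varepsilon_{ik}\varepsilon_{kj}>0$. Notation: $[\alpha]_+=\max(\alpha,0)$, $\mathbb B_k^-:=\prod_{j:\varepsilon_{kj}<0}B_j^{-\varepsilon_{kj}}$, $\delta_{ij}$ the Kronecker delta. All tori are split algebraic tori $\mathbb G_m^{I}$ (resp. $\mathbb G_m^{2|I|}$). *)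

theory Defs
  imports Complex_Main
begin

text \<open>The coordinate ring of the split torus with coordinates indexed by a finite type 'v
  over a field 'k of characteristic 0 is the Laurent polynomial ring
  'k[x_v^{+-1}], represented as finitely supported functions from exponent
  vectors ('v => int) to coefficients.\<close>

definition laurent :: "(('v \<Rightarrow> int) \<Rightarrow> 'k::zero) \<Rightarrow> bool" where
  "laurent f \<longleftrightarrow> finite {a. f a \<noteq> 0}"

definition lmult :: "(('v \<Rightarrow> int) \<Rightarrow> 'k::comm_ring_1) \<Rightarrow> (('v \<Rightarrow> int) \<Rightarrow> 'k) \<Rightarrow> (('v \<Rightarrow> int) \<Rightarrow> 'k)" where
  "lmult f g = (\<lambda>c. \<Sum>p\<in>{(a, b). f a \<noteq> 0 \<and> g b \<noteq> 0 \<and> (\<lambda>i. a i + b i) = c}. f (fst p) * g (snd p))"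

definition euler :: "'v \<Rightarrow> (('v \<Rightarrow> int) \<Rightarrow> 'k::comm_ring_1) \<Rightarrow> (('v \<Rightarrow> int) \<Rightarrow> 'k)" where
  "euler i f = (\<lambda>a. of_int (a i) * f a)"

text \<open>The (log-canonical) Poisson bracket on the torus with {x_i,x_j} = Omega_ij x_i x_j:
  {f,g} = sum_{i,j} Omega_ij x_i x_j (d_i f)(d_j g).\<close>
definition lbracket :: "('v::finite \<Rightarrow> 'v \<Rightarrow> 'k::comm_ring_1) \<Rightarrow> (('v \<Rightarrow> int) \<Rightarrow> 'k) \<Rightarrow> (('v \<Rightarrow> int) \<Rightarrow> 'k) \<Rightarrow> (('v \<Rightarrow> int) \<Rightarrow> 'k)" where
  "lbracket \<Omega> f g = (\<lambda>c. \<Sum>i\<in>UNIV. \<Sum>j\<in>UNIV. \<Omega> i j * lmult (euler i f) (euler j g) c)"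

text \<open>A monomial map of tori, from the torus with coordinates 'v to the one with
  coordinates 'w, given by m w = exponent vector of the pullback of the coordinate x'_w.
  expmap m a is the exponent vector of the pullback of the monomial x'^a.\<close>
definition expmap :: "('w::finite \<Rightarrow> ('v \<Rightarrow> int)) \<Rightarrow> ('w \<Rightarrow> int) \<Rightarrow> ('v \<Rightarrow> int)" where
  "expmap m a = (\<lambda>v. \<Sum>w\<in>UNIV. a w * m w v)"

definition pullback :: "('w::finite \<Rightarrow> ('v \<Rightarrow> int)) \<Rightarrow> (('w \<Rightarrow> int) \<Rightarrow> 'k::comm_ring_1) \<Rightarrow> (('v \<Rightarrow> int) \<Rightarrow> 'k)" where
  "pullback m f = (\<lambda>c. \<Sum>a\<in>{a. f a \<noteq> 0 \<and> expmap m a = c}. f a)"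

definition poisson_map :: "('v::finite \<Rightarrow> 'v \<Rightarrow> 'k::comm_ring_1) \<Rightarrow> ('w::finite \<Rightarrow> 'w \<Rightarrow> 'k) \<Rightarrow> ('w \<Rightarrow> ('v \<Rightarrow> int)) \<Rightarrow> bool" where
  "poisson_map \<Omega> \<Omega>' m \<longleftrightarrow>
     (\<forall>f g. laurent f \<longrightarrow> laurent g \<longrightarrow>
        pullback m (lbracket \<Omega>' f g) = lbracket \<Omega> (pullback m f) (pullback m g))"

definition is_feed :: "('i::finite \<Rightarrow> 'i \<Rightarrow> int) \<Rightarrow> ('i \<Rightarrow> int) \<Rightarrow> bool" where
  "is_feed \<epsilon> d \<longleftrightarrow> (\<forall>i. d i > 0) \<and>
     (\<forall>i j. (of_int (\<epsilon> i j) / of_int (d j) :: rat) = - (of_int (\<epsilon> j i) / of_int (d i)))"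

definition mut_eps :: "('i \<Rightarrow> 'i \<Rightarrow> int) \<Rightarrow> 'i \<Rightarrow> 'i \<Rightarrow> 'i \<Rightarrow> int" where
  "mut_eps \<epsilon> k i j =
     (if i = k \<or> j = k then - \<epsilon> i j
      else if \<epsilon> i k * \<epsilon> k j \<le> 0 then \<epsilon> i j
      else \<epsilon> i j + \<bar>\<epsilon> i k\<bar> * \<epsilon> k j)"

definition eps_hat :: "('i \<Rightarrow> 'i \<Rightarrow> int) \<Rightarrow> ('i \<Rightarrow> int) \<Rightarrow> 'i \<Rightarrow> 'i \<Rightarrow> 'k::field" where
  "eps_hat \<epsilon> d i j = of_int (\<epsilon> i j) / of_int (d j)"

definition omegaX :: "('i \<Rightarrow> 'i \<Rightarrow> int) \<Rightarrow> ('i \<Rightarrow> int) \<Rightarrow> 'i \<Rightarrow> 'i \<Rightarrow> 'k::field" where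
  "omegaX \<epsilon> d = eps_hat \<epsilon> d"

text \<open>Poisson structure on D_i, coordinates Inl i = B_i, Inr i = X_i:
  {B_i,B_j} = 0, {X_i,B_j} = d_i^{-1} delta_ij X_i B_j, {X_i,X_j} = eps_hat_ij X_i X_j
  (and {B_j,X_i} = - {X_i,B_j} by skew-symmetry).\<close>
definition omegaD :: "('i \<Rightarrow> 'i \<Rightarrow> int) \<Rightarrow> ('i \<Rightarrow> int) \<Rightarrow> ('i + 'i) \<Rightarrow> ('i + 'i) \<Rightarrow> 'k::field" where
  "omegaD \<epsilon> d u v = (case (u, v) of
      (Inl i, Inl j) \<Rightarrow> 0
    | (Inr i, Inl j) \<Rightarrow> (if i = j then 1 / of_int (d i) else 0)
    | (Inl i, Inr j) \<Rightarrow> (if i = j then - (1 / of_int (d j)) else 0)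
    | (Inr i, Inr j) \<Rightarrow> eps_hat \<epsilon> d i j)"

definition muX :: "('i \<Rightarrow> 'i \<Rightarrow> int) \<Rightarrow> 'i \<Rightarrow> 'i \<Rightarrow> ('i \<Rightarrow> int)" where
  "muX \<epsilon> k i = (if i = k then (\<lambda>v. if v = k then -1 else 0)
     else (\<lambda>v. if v = i then 1 else if v = k then max (\<epsilon> i k) 0 else 0))"

text \<open>The map mu'_k on D-tori: (mu'_k)^* B'_i = B_i (i ~= k),
  (mu'_k)^* B'_k = (prod_{eps_kj<0} B_j^{-eps_kj}) / B_k, and the X-formulas as above.\<close>
definition muD :: "('i \<Rightarrow> 'i \<Rightarrow> int) \<Rightarrow> 'i \<Rightarrow> ('i + 'i) \<Rightarrow> (('i + 'i) \<Rightarrow> int)" where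
  "muD \<epsilon> k u = (case u of
      Inl i \<Rightarrow> (if i = k then
                  (\<lambda>v. case v of
                        Inl j \<Rightarrow> (if \<epsilon> k j < 0 then - \<epsilon> k j else 0) - (if j = k then 1 else 0)
                      | Inr j \<Rightarrow> 0)
                else (\<lambda>v. if v = Inl i then 1 else 0))
    | Inr i \<Rightarrow> (if i = k then (\<lambda>v. if v = Inr k then -1 else 0)
                else (\<lambda>v. if v = Inr i then 1 else if v = Inr k then max (\<epsilon> i k) 0 else 0)))"

end

theory Submission
  imports Defs "HOL-Library.Function_Algebras"
begin

text \<open>The log-canonical bracket of two monomials is \<open>{x^a, x^b} = B(a, b) x^(a + b)\<close>
  with the bilinear form \<open>B(a, b) = \<Sum> \<Omega>_ij a_i b_j\<close> (\<open>bracket_form\<close> below), and a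
  monomial map pulls \<open>x'^a\<close> back to \<open>x^(m a)\<close>. So a monomial map is Poisson as soon as
  \<open>B_\<Omega>(m a, m b) = B_\<Omega>'(a, b)\<close>, and by bilinearity it suffices to check this on coordinate
  vectors, i.e. on the brackets of the pulled-back coordinates. For \<open>\<mu>'_k\<close> each of these
  reduces, via the skew-symmetry \<open>\<epsilon>_jk / d_k = - \<epsilon>_kj / d_j\<close> in the form
  \<open>[\<epsilon>_jk]_+ / d_k = [-\<epsilon>_kj]_+ / d_j\<close>, to the integer identity
  \<open>[-b]_+ a + [a]_+ b = [ab > 0] |a| b\<close> behind the mutation rule.\<close>

section \<open>Monomial maps between log-canonical tori\<close>

definition bracket_form :: "('v::finite \<Rightarrow> 'v \<Rightarrow> 'k::comm_ring_1) \<Rightarrow> ('v \<Rightarrow> int) \<Rightarrow> ('v \<Rightarrow> int) \<Rightarrow> 'k" where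
  "bracket_form \<Omega> a b = (\<Sum>i\<in>UNIV. \<Sum>j\<in>UNIV. \<Omega> i j * (of_int (a i) * of_int (b j)))"

abbreviation supp :: "(('v \<Rightarrow> int) \<Rightarrow> 'k::zero) \<Rightarrow> ('v \<Rightarrow> int) set" where
  "supp f \<equiv> {a. f a \<noteq> 0}"

lemma lmult_eq_sum:
  fixes f g :: "('v \<Rightarrow> int) \<Rightarrow> 'k::comm_ring_1"
  assumes "finite A" "finite B" "supp f \<subseteq> A" "supp g \<subseteq> B"
  shows "lmult f g c = (\<Sum>p\<in>{p\<in>A \<times> B. fst p + snd p = c}. f (fst p) * g (snd p))"
  unfolding lmult_def plus_fun_def
  by (rule sum.mono_neutral_left) (use assms in \<open>auto intro: finite_subset\<close>)

lemma lbracket_eq_sum: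
  fixes f g :: "('v::finite \<Rightarrow> int) \<Rightarrow> 'k::comm_ring_1"
  assumes "finite A" "finite B" "supp f \<subseteq> A" "supp g \<subseteq> B"
  shows "lbracket \<Omega> f g c =
    (\<Sum>p\<in>{p\<in>A \<times> B. fst p + snd p = c}. bracket_form \<Omega> (fst p) (snd p) * (f (fst p) * g (snd p)))"
proof -
  let ?P = "{p\<in>A \<times> B. fst p + snd p = c}"
  have "lmult (euler i f) (euler j g) c =
      (\<Sum>p\<in>?P. of_int (fst p i) * f (fst p) * (of_int (snd p j) * g (snd p)))" for i j
    using assms by (subst lmult_eq_sum[of A B]) (auto simp: euler_def)
  then have "lbracket \<Omega> f g c = (\<Sum>i\<in>UNIV. \<Sum>j\<in>UNIV. \<Sum>p\<in>?P.
      \<Omega> i j * (of_int (fst p i) * of_int (snd p j)) * (f (fst p) * g (snd p)))"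
    unfolding lbracket_def by (simp add: sum_distrib_left mult_ac)
  also have "\<dots> = (\<Sum>p\<in>?P. \<Sum>i\<in>UNIV. \<Sum>j\<in>UNIV.
      \<Omega> i j * (of_int (fst p i) * of_int (snd p j)) * (f (fst p) * g (snd p)))"
    by (simp only: sum.swap[of _ UNIV ?P])
  finally show ?thesis
    unfolding bracket_form_def by (simp add: sum_distrib_right)
qed

lemma pullback_eq_sum:
  fixes f :: "('w::finite \<Rightarrow> int) \<Rightarrow> 'k::comm_ring_1"
  assumes "finite A" "supp f \<subseteq> A"
  shows "pullback m f c = (\<Sum>a\<in>{a\<in>A. expmap m a = c}. f a)"
  unfolding pullback_def by (rule sum.mono_neutral_left) (use assms in auto)

lemma expmap_add: "expmap m (a + b) = expmap m a + expmap m b"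
  by (auto simp: expmap_def plus_fun_def sum.distrib algebra_simps)

lemma supp_pullback_subset:
  fixes f :: "('w::finite \<Rightarrow> int) \<Rightarrow> 'k::comm_ring_1"
  assumes "laurent f"
  shows "supp (pullback m f) \<subseteq> expmap m ` supp f"
proof
  fix c assume "c \<in> supp (pullback m f)"
  then have "(\<Sum>a\<in>{a\<in>supp f. expmap m a = c}. f a) \<noteq> 0"
    using assms pullback_eq_sum[of "supp f" f m c] by (simp add: laurent_def)
  then obtain a where "a \<in> {a\<in>supp f. expmap m a = c}"
    by (rule sum.not_neutral_contains_not_neutral)
  then show "c \<in> expmap m ` supp f" by blast
qed

lemma supp_lbracket_subset:
  fixes f g :: "('v::finite \<Rightarrow> int) \<Rightarrow> 'k::comm_ring_1"
  assumes "laurent f" "laurent g"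
  shows "supp (lbracket \<Omega> f g) \<subseteq> (\<lambda>p. fst p + snd p) ` (supp f \<times> supp g)"
proof
  fix c assume "c \<in> supp (lbracket \<Omega> f g)"
  then have "(\<Sum>p\<in>{p\<in>supp f \<times> supp g. fst p + snd p = c}.
      bracket_form \<Omega> (fst p) (snd p) * (f (fst p) * g (snd p))) \<noteq> 0"
    using assms lbracket_eq_sum[of "supp f" "supp g" f g \<Omega> c] by (simp add: laurent_def)
  then obtain p where "p \<in> {p\<in>supp f \<times> supp g. fst p + snd p = c}"
    by (rule sum.not_neutral_contains_not_neutral)
  then show "c \<in> (\<lambda>p. fst p + snd p) ` (supp f \<times> supp g)" by blast
qed

lemma pullback_lbracket_eq_sum:
  fixes f g :: "('w::finite \<Rightarrow> int) \<Rightarrow> 'k::comm_ring_1"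
  assumes "laurent f" "laurent g"
  shows "pullback m (lbracket \<Omega>' f g) c =
    (\<Sum>p\<in>{p\<in>supp f \<times> supp g. expmap m (fst p + snd p) = c}.
       bracket_form \<Omega>' (fst p) (snd p) * (f (fst p) * g (snd p)))"
    (is "_ = (\<Sum>p\<in>?S c. ?h p)")
proof -
  let ?add = "\<lambda>p. fst p + snd p"
  let ?T = "{x\<in>?add ` (supp f \<times> supp g). expmap m x = c}"
  have fin: "finite (supp f \<times> supp g)" using assms by (simp add: laurent_def)
  have "pullback m (lbracket \<Omega>' f g) c = (\<Sum>x\<in>?T. lbracket \<Omega>' f g x)"
    using fin supp_lbracket_subset[OF assms] by (intro pullback_eq_sum) auto
  also have "\<dots> = (\<Sum>x\<in>?T. \<Sum>p\<in>{p\<in>?S c. ?add p = x}. ?h p)"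
  proof (rule sum.cong[OF refl])
    fix x assume "x \<in> ?T"
    then have "{p\<in>supp f \<times> supp g. ?add p = x} = {p\<in>?S c. ?add p = x}" by blast
    then show "lbracket \<Omega>' f g x = (\<Sum>p\<in>{p\<in>?S c. ?add p = x}. ?h p)"
      using assms lbracket_eq_sum[of "supp f" "supp g" f g \<Omega>' x] by (simp add: laurent_def)
  qed
  also have "\<dots> = (\<Sum>p\<in>?S c. ?h p)"
    using fin by (intro sum.group) (blast intro: rev_finite_subset)+
  finally show ?thesis .
qed

lemma pullback_mult_pullback_eq_sum:
  fixes f g :: "('w::finite \<Rightarrow> int) \<Rightarrow> 'k::comm_ring_1"
  assumes "laurent f" "laurent g"
  shows "pullback m f u * pullback m g v =
    (\<Sum>p\<in>{p\<in>supp f \<times> supp g. expmap m (fst p) = u \<and> expmap m (snd p) = v}. f (fst p) * g (snd p))"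
proof -
  have "{p\<in>supp f \<times> supp g. expmap m (fst p) = u \<and> expmap m (snd p) = v} =
      {a\<in>supp f. expmap m a = u} \<times> {b\<in>supp g. expmap m b = v}" by auto
  moreover have "pullback m f u = (\<Sum>a\<in>{a\<in>supp f. expmap m a = u}. f a)"
    "pullback m g v = (\<Sum>b\<in>{b\<in>supp g. expmap m b = v}. g b)"
    using assms by (simp_all add: pullback_eq_sum laurent_def)
  ultimately show ?thesis
    by (simp add: sum_product sum.cartesian_product case_prod_beta)
qed

lemma lbracket_pullback_eq_sum:
  fixes f g :: "('w::finite \<Rightarrow> int) \<Rightarrow> 'k::comm_ring_1" and \<Omega> :: "'v::finite \<Rightarrow> 'v \<Rightarrow> 'k"
  assumes "laurent f" "laurent g"
  shows "lbracket \<Omega> (pullback m f) (pullback m g) c =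
    (\<Sum>p\<in>{p\<in>supp f \<times> supp g. expmap m (fst p + snd p) = c}.
       bracket_form \<Omega> (expmap m (fst p)) (expmap m (snd p)) * (f (fst p) * g (snd p)))"
    (is "_ = (\<Sum>p\<in>?S. ?h p)")
proof -
  let ?E = "\<lambda>p. (expmap m (fst p), expmap m (snd p))"
  let ?Q = "{q\<in>expmap m ` supp f \<times> expmap m ` supp g. fst q + snd q = c}"
  have fin: "finite (supp f)" "finite (supp g)" using assms by (simp_all add: laurent_def)
  have "lbracket \<Omega> (pullback m f) (pullback m g) c =
      (\<Sum>q\<in>?Q. bracket_form \<Omega> (fst q) (snd q) * (pullback m f (fst q) * pullback m g (snd q)))"
    using fin supp_pullback_subset[OF assms(1), of m] supp_pullback_subset[OF assms(2), of m]
    by (intro lbracket_eq_sum) auto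
  also have "\<dots> = (\<Sum>q\<in>?Q. \<Sum>p\<in>{p\<in>?S. ?E p = q}. ?h p)"
  proof (rule sum.cong[OF refl])
    fix q assume "q \<in> ?Q"
    then have "{p\<in>supp f \<times> supp g. expmap m (fst p) = fst q \<and> expmap m (snd p) = snd q} =
        {p\<in>?S. ?E p = q}" by (auto simp: expmap_add)
    then show "bracket_form \<Omega> (fst q) (snd q) * (pullback m f (fst q) * pullback m g (snd q)) =
        (\<Sum>p\<in>{p\<in>?S. ?E p = q}. ?h p)"
      by (auto simp: pullback_mult_pullback_eq_sum[OF assms] sum_distrib_left intro: sum.cong)
  qed
  also have "\<dots> = (\<Sum>p\<in>?S. ?h p)"
    using fin by (intro sum.group) (auto simp: expmap_add)
  finally show ?thesis .
qed

lemma poisson_mapI_bracket_form: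
  assumes "\<And>a b. bracket_form \<Omega> (expmap m a) (expmap m b) = bracket_form \<Omega>' a b"
  shows "poisson_map \<Omega> \<Omega>' m"
  unfolding poisson_map_def fun_eq_iff
  by (simp add: pullback_lbracket_eq_sum lbracket_pullback_eq_sum assms)

lemma bracket_form_eq_left:
  "bracket_form \<Omega> a b = (\<Sum>i\<in>UNIV. of_int (a i) * (\<Sum>j\<in>UNIV. \<Omega> i j * of_int (b j)))"
  by (simp add: bracket_form_def sum_distrib_left mult_ac)

lemma bracket_form_eq_right:
  "bracket_form \<Omega> a b = (\<Sum>j\<in>UNIV. of_int (b j) * (\<Sum>i\<in>UNIV. \<Omega> i j * of_int (a i)))"
  unfolding bracket_form_def by (subst sum.swap) (simp add: sum_distrib_left mult_ac)

lemma bracket_form_expmap_left: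
  fixes \<Omega> :: "'v::finite \<Rightarrow> 'v \<Rightarrow> 'k::comm_ring_1" and m :: "'w::finite \<Rightarrow> 'v \<Rightarrow> int"
  shows "bracket_form \<Omega> (expmap m a) b = (\<Sum>x\<in>UNIV. of_int (a x) * bracket_form \<Omega> (m x) b)"
proof -
  let ?R = "\<lambda>i. \<Sum>j\<in>UNIV. \<Omega> i j * of_int (b j)"
  have "bracket_form \<Omega> (expmap m a) b = (\<Sum>i\<in>UNIV. \<Sum>x\<in>UNIV. of_int (a x) * (of_int (m x i) * ?R i))"
    unfolding bracket_form_eq_left expmap_def of_int_sum of_int_mult sum_distrib_right mult.assoc ..
  also have "\<dots> = (\<Sum>x\<in>UNIV. of_int (a x) * (\<Sum>i\<in>UNIV. of_int (m x i) * ?R i))"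
    by (subst sum.swap) (simp add: sum_distrib_left)
  finally show ?thesis
    unfolding bracket_form_eq_left .
qed

lemma bracket_form_expmap_right:
  fixes \<Omega> :: "'v::finite \<Rightarrow> 'v \<Rightarrow> 'k::comm_ring_1" and m :: "'w::finite \<Rightarrow> 'v \<Rightarrow> int"
  shows "bracket_form \<Omega> a (expmap m b) = (\<Sum>y\<in>UNIV. of_int (b y) * bracket_form \<Omega> a (m y))"
proof -
  let ?L = "\<lambda>j. \<Sum>i\<in>UNIV. \<Omega> i j * of_int (a i)"
  have "bracket_form \<Omega> a (expmap m b) = (\<Sum>j\<in>UNIV. \<Sum>y\<in>UNIV. of_int (b y) * (of_int (m y j) * ?L j))"
    unfolding bracket_form_eq_right expmap_def of_int_sum of_int_mult sum_distrib_right mult.assoc ..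
  also have "\<dots> = (\<Sum>y\<in>UNIV. of_int (b y) * (\<Sum>j\<in>UNIV. of_int (m y j) * ?L j))"
    by (subst sum.swap) (simp add: sum_distrib_left)
  finally show ?thesis
    unfolding bracket_form_eq_right .
qed

lemma poisson_mapI_coordinates:
  assumes "\<And>x y. bracket_form \<Omega> (m x) (m y) = \<Omega>' x y"
  shows "poisson_map \<Omega> \<Omega>' m"
  by (rule poisson_mapI_bracket_form)
    (simp only: bracket_form_expmap_left bracket_form_expmap_right[of \<Omega>] assms,
     simp add: bracket_form_eq_left mult_ac)

lemma sum_unit_plus_unit:
  fixes F :: "'v::finite \<Rightarrow> 'k::comm_ring_1"
  shows "(\<Sum>v\<in>UNIV. F v * of_int ((if v = p then 1 else 0) + (if v = q then c else 0))) = F p + of_int c * F q"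
proof -
  have "(\<Sum>v\<in>UNIV. F v * of_int ((if v = p then 1 else 0) + (if v = q then c else 0)))
     = (\<Sum>v\<in>UNIV. (if v = p then F v else 0)) + (\<Sum>v\<in>UNIV. (if v = q then of_int c * F v else 0))"
    by (subst sum.distrib[symmetric]) (rule sum.cong, auto simp: algebra_simps)
  then show ?thesis by simp
qed

lemma bracket_form_unit_plus_unit:
  fixes \<Omega> :: "'v::finite \<Rightarrow> 'v \<Rightarrow> 'k::comm_ring_1"
  shows "bracket_form \<Omega> (\<lambda>v. (if v = i then 1 else 0) + (if v = k then c else 0))
                 (\<lambda>v. (if v = j then 1 else 0) + (if v = k then c' else 0))
       = \<Omega> i j + of_int c' * \<Omega> i k + of_int c * \<Omega> k j + of_int c * of_int c' * \<Omega> k k"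
  unfolding bracket_form_eq_left sum_unit_plus_unit
  by (subst mult.commute, subst sum_unit_plus_unit) (simp add: algebra_simps)

section \<open>Mutation of a feed\<close>

lemma mut_eps_off_direction:
  assumes "i \<noteq> k" "j \<noteq> k"
  shows "mut_eps \<epsilon> k i j = \<epsilon> i j + max (- \<epsilon> k j) 0 * \<epsilon> i k + max (\<epsilon> i k) 0 * \<epsilon> k j"
proof -
  have "max (- b) 0 * a + max a 0 * b = (if a * b \<le> 0 then 0 else \<bar>a\<bar> * b)" for a b :: int
    by (cases a "0::int" rule: linorder_cases; cases b "0::int" rule: linorder_cases)
      (simp_all add: mult_less_0_iff mult_le_0_iff)
  then show ?thesis
    using assms by (simp add: mut_eps_def)
qed

lemma muX_eq:
  "muX \<epsilon> k w = (\<lambda>v. (if v = w then 1 else 0) + (if v = k then (if w = k then -2 else max (\<epsilon> w k) 0) else 0))"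
  by (auto simp: muX_def)

definition muB :: "('i \<Rightarrow> 'i \<Rightarrow> int) \<Rightarrow> 'i \<Rightarrow> 'i \<Rightarrow> 'i \<Rightarrow> int" where
  "muB \<epsilon> k w = (if w = k then (\<lambda>j. max (- \<epsilon> k j) 0 - (if j = k then 1 else 0))
     else (\<lambda>j. if j = w then 1 else 0))"

lemma muD_Inl: "muD \<epsilon> k (Inl w) = (\<lambda>v. case v of Inl j \<Rightarrow> muB \<epsilon> k w j | Inr j \<Rightarrow> 0)"
  by (rule ext) (auto simp: muD_def muB_def split: sum.split)

lemma muD_Inr: "muD \<epsilon> k (Inr w) = (\<lambda>v. case v of Inl j \<Rightarrow> 0 | Inr j \<Rightarrow> muX \<epsilon> k w j)"
  by (rule ext) (auto simp: muD_def muX_def split: sum.split)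

lemma bracket_form_omegaD:
  fixes \<epsilon> :: "'i::finite \<Rightarrow> 'i \<Rightarrow> int"
  shows "bracket_form (omegaD \<epsilon> d :: ('i + 'i) \<Rightarrow> ('i + 'i) \<Rightarrow> 'k::field) a b =
    bracket_form (eps_hat \<epsilon> d) (a \<circ> Inr) (b \<circ> Inr) +
    (\<Sum>i\<in>UNIV. (of_int (a (Inr i)) * of_int (b (Inl i)) - of_int (a (Inl i)) * of_int (b (Inr i))) / of_int (d i))"
proof -
  have UNIV_Plus: "(UNIV :: ('i + 'i) set) = UNIV <+> UNIV" by simp
  have if_times: "(if P then x else 0) * y = (if P then x * y else 0)" for P and x y :: 'k by simp
  show ?thesis
    unfolding bracket_form_def UNIV_Plus sum.Plus[OF finite finite] o_def
    by (simp add: omegaD_def sum.distrib diff_divide_distrib sum_subtractf if_times sum_negf)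
qed

locale feed =
  fixes \<epsilon> :: "'i::finite \<Rightarrow> 'i \<Rightarrow> int" and d :: "'i \<Rightarrow> int"
  assumes is_feed: "is_feed \<epsilon> d"
begin

lemma d_pos: "0 < d i"
  using is_feed unfolding is_feed_def by blast

lemma eps_skew_rat: "(of_int (\<epsilon> i j) / of_int (d j) :: rat) = - (of_int (\<epsilon> j i) / of_int (d i))"
  using is_feed unfolding is_feed_def by blast

lemma eps_hat_skew: "eps_hat \<epsilon> d i j = - (eps_hat \<epsilon> d j i :: 'k::field_char_0)"
  using arg_cong[OF eps_skew_rat[of i j], of "of_rat :: rat \<Rightarrow> 'k"]
  by (simp add: eps_hat_def of_rat_divide of_rat_minus)

lemma eps_skew_int: "\<epsilon> i j * d i = - (\<epsilon> j i * d j)"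
proof -
  have "(of_int (\<epsilon> i j * d i) :: rat) = of_int (- (\<epsilon> j i * d j))"
    using eps_skew_rat[of i j] d_pos[of i] d_pos[of j] by (simp add: field_simps)
  then show ?thesis by (simp only: of_int_eq_iff)
qed

lemma eps_pos_iff_neg: "0 < \<epsilon> i j \<longleftrightarrow> \<epsilon> j i < 0"
proof -
  have "0 < \<epsilon> i j \<longleftrightarrow> 0 < \<epsilon> i j * d i" using d_pos[of i] by (simp add: zero_less_mult_iff)
  also have "\<dots> \<longleftrightarrow> \<epsilon> j i * d j < 0" using eps_skew_int[of i j] by linarith
  also have "\<dots> \<longleftrightarrow> \<epsilon> j i < 0" using d_pos[of j] by (simp add: mult_less_0_iff)
  finally show ?thesis .
qed

lemma eps_diag: "\<epsilon> i i = 0"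
  using eps_skew_int[of i i] d_pos[of i] by simp

lemma pos_part_eps_div_d:
  "(of_int (max (\<epsilon> j k) 0) / of_int (d k) :: 'k::field_char_0) = of_int (max (- \<epsilon> k j) 0) / of_int (d j)"
proof (cases "0 < \<epsilon> j k")
  case True
  then show ?thesis
    using eps_pos_iff_neg[of j k] eps_hat_skew[of j k] by (simp add: eps_hat_def)
next
  case False
  then show ?thesis
    using eps_pos_iff_neg[of j k] by simp
qed

lemma bracket_form_muX:
  "bracket_form (eps_hat \<epsilon> d :: 'i \<Rightarrow> 'i \<Rightarrow> 'k::field_char_0) (muX \<epsilon> k i) (muX \<epsilon> k j) =
    eps_hat (mut_eps \<epsilon> k) d i j"
proof -
  let ?c = "\<lambda>w. if w = k then -2 else max (\<epsilon> w k) 0"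
  have expand: "bracket_form (eps_hat \<epsilon> d :: 'i \<Rightarrow> 'i \<Rightarrow> 'k) (muX \<epsilon> k i) (muX \<epsilon> k j) =
      eps_hat \<epsilon> d i j + of_int (?c j) * eps_hat \<epsilon> d i k + of_int (?c i) * eps_hat \<epsilon> d k j"
    unfolding muX_eq bracket_form_unit_plus_unit by (simp add: eps_hat_def eps_diag)
  consider "i = k" | "i \<noteq> k" "j = k" | "i \<noteq> k" "j \<noteq> k" by blast
  then show ?thesis
  proof cases
    case 1
    then show ?thesis
      unfolding expand by (cases "j = k") (simp_all add: eps_hat_def mut_eps_def eps_diag)
  next
    case 2
    then show ?thesis
      unfolding expand by (simp add: eps_hat_def mut_eps_def eps_diag)
  next
    case 3
    have "of_int (max (\<epsilon> j k) 0) * eps_hat \<epsilon> d i k =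
        of_int (\<epsilon> i k) * (of_int (max (- \<epsilon> k j) 0) / (of_int (d j) :: 'k))"
      unfolding eps_hat_def pos_part_eps_div_d[symmetric] by simp
    with 3 show ?thesis
      unfolding expand by (simp add: mut_eps_off_direction eps_hat_def add_divide_distrib)
  qed
qed

lemma muX_muB_pairing:
  "(\<Sum>i\<in>UNIV. of_int (muX \<epsilon> k w i) * of_int (muB \<epsilon> k w' i) / of_int (d i) :: 'k::field_char_0) =
    (if w = w' then 1 / of_int (d w) else 0)"
proof -
  let ?F = "\<lambda>i. of_int (muB \<epsilon> k w' i) / (of_int (d i) :: 'k)"
  have "(\<Sum>i\<in>UNIV. of_int (muX \<epsilon> k w i) * of_int (muB \<epsilon> k w' i) / of_int (d i) :: 'k) =
      (\<Sum>i\<in>UNIV. ?F i * of_int (muX \<epsilon> k w i))"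
    by (simp add: mult.commute)
  also have "\<dots> = ?F w + of_int (if w = k then -2 else max (\<epsilon> w k) 0) * ?F k"
    unfolding muX_eq by (rule sum_unit_plus_unit)
  also have "\<dots> = (if w = w' then 1 / of_int (d w) else 0)"
    by (cases "w = k"; cases "w' = k") (auto simp: muB_def eps_diag pos_part_eps_div_d)
  finally show ?thesis .
qed

lemma bracket_form_muD:
  "bracket_form (omegaD \<epsilon> d :: ('i + 'i) \<Rightarrow> ('i + 'i) \<Rightarrow> 'k::field_char_0) (muD \<epsilon> k u) (muD \<epsilon> k u') =
    omegaD (mut_eps \<epsilon> k) d u u'"
proof (cases u; cases u')
  fix w w' assume "u = Inl w" "u' = Inl w'"
  then show ?thesis
    unfolding bracket_form_omegaD by (simp add: muD_Inl o_def bracket_form_def omegaD_def)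
next
  fix w w' assume "u = Inl w" "u' = Inr w'"
  then show ?thesis
    unfolding bracket_form_omegaD using muX_muB_pairing[of k w' w, where 'k = 'k]
    by (simp add: muD_Inl muD_Inr o_def bracket_form_def omegaD_def sum_negf mult.commute)
next
  fix w w' assume "u = Inr w" "u' = Inl w'"
  then show ?thesis
    unfolding bracket_form_omegaD using muX_muB_pairing[of k w w', where 'k = 'k]
    by (simp add: muD_Inl muD_Inr o_def bracket_form_def omegaD_def)
next
  fix w w' assume "u = Inr w" "u' = Inr w'"
  moreover have "muD \<epsilon> k (Inr v) \<circ> Inr = muX \<epsilon> k v" for v
    by (simp add: muD_Inr fun_eq_iff)
  ultimately show ?thesis
    unfolding bracket_form_omegaD by (simp add: muD_Inr bracket_form_muX omegaD_def)
qed

end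

theorem corollary2p9:
  fixes \<epsilon> :: "'i::finite \<Rightarrow> 'i \<Rightarrow> int" and d :: "'i \<Rightarrow> int" and k :: 'i
  assumes "is_feed \<epsilon> d"
  shows "poisson_map (omegaD \<epsilon> d :: ('i + 'i) \<Rightarrow> ('i + 'i) \<Rightarrow> 'k::field_char_0)
            (omegaD (mut_eps \<epsilon> k) d) (muD \<epsilon> k)
       \<and> poisson_map (omegaX \<epsilon> d :: 'i \<Rightarrow> 'i \<Rightarrow> 'k)
            (omegaX (mut_eps \<epsilon> k) d) (muX \<epsilon> k)"
proof
  interpret feed \<epsilon> d by (rule feed.intro) (fact assms)
  show "poisson_map (omegaD \<epsilon> d :: ('i + 'i) \<Rightarrow> ('i + 'i) \<Rightarrow> 'k) (omegaD (mut_eps \<epsilon> k) d) (muD \<epsilon> k)"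
    by (rule poisson_mapI_coordinates) (rule bracket_form_muD)
  show "poisson_map (omegaX \<epsilon> d :: 'i \<Rightarrow> 'i \<Rightarrow> 'k) (omegaX (mut_eps \<epsilon> k) d) (muX \<epsilon> k)"
    unfolding omegaX_def by (rule poisson_mapI_coordinates) (rule bracket_form_muX)
qed

end
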